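(* Let $\mu$ be a positive Borel measure on $\mathbb{R}$, absolutely continuous with respect to Lebesgue measure, with finite moments of all orders, supported on a set $E$ with infinitely many points whose convex hull is $[a,b]$, and let $c<a$, $N>0$. With the notation of the context, for every $n\ge1$, $$c<y_{n,1}^{c,N}<y_{n,1}^{c}<x_{n-1,1}^{c,[1]}<y_{n,2}^{c,N}<y_{n,2}^{c}<\cdots<x_{n-1,n-1}^{c,[1]}<y_{n,n}^{c,N}<y_{n,n}^{c}.$$ Moreover each $y_{n,k}^{c,N}$ is a decreasing function of $N$, and for each $k=1,\ldots,n-1$, $$\lim_{N\to\infty}y_{n,1}^{c,N}=c,\qquad \lim_{N\to\infty}y_{n,k+1}^{c,N}=x_{n-1,k}^{c,[1]},$$ $$\lim_{N\to\infty}N\,[y_{n,1}^{c,N}-c]=\frac{-Q_n^c(c)}{B_n^c\,P_{n-1}^{c,[1]}(c)},\qquad \lim_{N\to\infty}N\,[y_{n,k+1}^{c,N}-x_{n-1,k}^{c,[1]}]=\frac{-Q_n^c(x_{n-1,k}^{c,[1]})}{B_n^c\,(x_{n-1,k}^{c,[1]}-c)\,[P_{n-1}^{c,[1]}]'(x_{n-1,k}^{c,[1]})}.$$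
   Context: $\{P_n\}$ is the monic orthogonal polynomial sequence (MOPS) for $\mu$, $\|f\|_\mu^2=\int f^2d\mu$. $\{Q_n^c\}$ is the MOPS for $\langle f,g\rangle_\nu=\int f g\frac{1}{x-c}d\mu$. $\{P_n^{c,[1]}\}$ is the MOPS for $(x-c)d\mu(x)$, i.e. $P_n^{c,[1]}(x)=\frac{1}{x-c}\big(P_{n+1}(x)-\frac{P_{n+1}(c)}{P_n(c)}P_n(x)\big)$. $\{Q_n^{c,N}\}$ is the MOPS for $\langle f,g\rangle_{\nu_N}=\int fg\frac{1}{x-c}d\mu+Nf(c)g(c)$. $B_n^c=\frac{-Q_n^c(c)P_{n-1}(c)}{\|P_{n-1}\|_\mu^2}$. The zeros of $Q_n^c$, $Q_n^{c,N}$, $P_{n-1}^{c,[1]}$ are denoted $y_{n,s}^c$, $y_{n,s}^{c,N}$ ($s=1,\dots,n$), $x_{n-1,s}^{c,[1]}$ ($s=1,\dots,n-1$), each arranged in increasing order. *)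

theory Defs
  imports "HOL-Analysis.Analysis" "HOL-Computational_Algebra.Polynomial"
begin

definition msupport :: "real measure \<Rightarrow> real set" where
  "msupport M = {x. \<forall>e>0. emeasure M (ball x e) > 0}"

definition is_MOPS :: "(real poly \<Rightarrow> real poly \<Rightarrow> real) \<Rightarrow> (nat \<Rightarrow> real poly) \<Rightarrow> bool" where
  "is_MOPS ip P \<longleftrightarrow>
     (\<forall>n. degree (P n) = n \<and> lead_coeff (P n) = 1) \<and>
     (\<forall>n m. n \<noteq> m \<longrightarrow> ip (P n) (P m) = 0) \<and>
     (\<forall>n. ip (P n) (P n) \<noteq> 0)"

definition ip_mu :: "real measure \<Rightarrow> real poly \<Rightarrow> real poly \<Rightarrow> real" where
  "ip_mu M f g = (\<integral>x. poly f x * poly g x \<partial>M)"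

definition ip_nu :: "real measure \<Rightarrow> real \<Rightarrow> real poly \<Rightarrow> real poly \<Rightarrow> real" where
  "ip_nu M c f g = (\<integral>x. poly f x * poly g x / (x - c) \<partial>M)"

definition ip_nuN :: "real measure \<Rightarrow> real \<Rightarrow> real \<Rightarrow> real poly \<Rightarrow> real poly \<Rightarrow> real" where
  "ip_nuN M c N f g = ip_nu M c f g + N * poly f c * poly g c"

definition ip_ker :: "real measure \<Rightarrow> real \<Rightarrow> real poly \<Rightarrow> real poly \<Rightarrow> real" where
  "ip_ker M c f g = (\<integral>x. poly f x * poly g x * (x - c) \<partial>M)"

(* k-th smallest real zero (k = 1, 2, ...) of p *)
definition zero_k :: "real poly \<Rightarrow> nat \<Rightarrow> real" where
  "zero_k p k = sorted_list_of_set {x. poly p x = 0} ! (k - 1)"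

end

theory Submission
  imports Defs
begin

text \<open>Write \<open>A = (x - c) P\<^sub>n\<^sub>-\<^sub>1\<^sup>c\<^sup>,\<^sup>[\<^sup>1\<^sup>]\<close> and \<open>P = P\<^sub>n\<^sub>-\<^sub>1\<close>. Orthogonality puts both \<open>Q\<^sub>n\<^sup>c\<close>
  and \<open>Q\<^sub>n\<^sup>c\<^sup>,\<^sup>N\<close> on the pencil \<open>A + t P\<close>, at parameters \<open>t\<^sub>Q < 0\<close> and
  \<open>t\<^sub>N = t\<^sub>Q / (1 + N B\<^sub>n\<^sup>c)\<close> with \<open>B\<^sub>n\<^sup>c > 0\<close>. A Christoffel--Darboux argument makes the Wronskian
  \<open>A' P - A P'\<close> positive, so \<open>-A/P\<close> is strictly decreasing between consecutive zeros of \<open>P\<close>.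
  The zeros of \<open>A + t P\<close> are the solutions of \<open>-A/P = t\<close>, hence its \<open>k\<close>-th zero is a strictly
  decreasing function of \<open>t\<close> and lies between the \<open>(k-1)\<close>-th and \<open>k\<close>-th zero of \<open>P\<close>. Interlacing
  and monotonicity in \<open>N\<close> follow from \<open>t\<^sub>Q < t\<^sub>N < 0\<close> (the parameter of \<open>A\<close>), the limits from \<open>t\<^sub>N \<rightarrow> 0\<close>, and the
  rates from \<open>N t\<^sub>N \<rightarrow> t\<^sub>Q / B\<^sub>n\<^sup>c\<close> divided by the derivative of \<open>-A/P\<close> at the zeros of \<open>A\<close>.\<close>

declare mult_pCons_left [simp del] mult_pCons_right [simp del]

section \<open>Zeros of polynomials orthogonal for a positive functional\<close>

definition orth_lower :: "(real poly \<Rightarrow> real) \<Rightarrow> real poly \<Rightarrow> nat \<Rightarrow> bool" where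
  "orth_lower L p m \<longleftrightarrow> (\<forall>q. degree q < m \<longrightarrow> L (p * q) = 0)"

locale linear_poly_functional =
  fixes L :: "real poly \<Rightarrow> real"
  assumes add: "L (p + q) = L p + L q"
    and smult: "L (smult a p) = a * L p"
begin

lemma zero [simp]: "L 0 = 0"
  using smult[of 0 0] by simp

lemma minus: "L (- p) = - L p"
  using smult[of "-1" p] by simp

lemma diff: "L (p - q) = L p - L q"
  using add[of p "-q"] minus[of q] by simp

lemma orth_lowerD: "orth_lower L p m \<Longrightarrow> q = 0 \<or> degree q < m \<Longrightarrow> L (p * q) = 0"
  unfolding orth_lower_def by auto

lemma MOPS_orth_lower:
  assumes "is_MOPS (\<lambda>f g. L (f * g)) P"
  shows "orth_lower L (P k) k"
  unfolding orth_lower_def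
proof (intro allI impI)
  fix q :: "real poly" assume "degree q < k"
  then show "L (P k * q) = 0"
  proof (induction "degree q" arbitrary: q rule: less_induct)
    case less
    define j where "j = degree q"
    define r where "r = q - smult (lead_coeff q) (P j)"
    have Pj: "degree (P j) = j" "lead_coeff (P j) = 1"
      using assms unfolding is_MOPS_def by metis+
    have orth_Pj: "L (P k * P j) = 0"
      using assms less.prems unfolding is_MOPS_def j_def by auto
    have "L (P k * q) = lead_coeff q * L (P k * P j) + L (P k * r)"
      unfolding r_def by (simp add: algebra_simps add smult diff)
    also have "L (P k * r) = 0"
    proof (cases "r = 0")
      case False
      have "degree r \<le> j" unfolding r_def j_def using Pj
        by (metis degree_diff_le degree_smult_le j_def le_refl)
      moreover have "coeff r j = 0" unfolding r_def j_def using Pj j_def by simp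
      ultimately have "degree r < j \<or> j = 0"
        using False by (metis le_neq_implies_less leading_coeff_0_iff)
      moreover have "j = 0 \<Longrightarrow> r = 0"
        using \<open>degree r \<le> j\<close> \<open>coeff r j = 0\<close> by (metis le_zero_eq leading_coeff_0_iff)
      ultimately show ?thesis using less False j_def by auto
    qed simp
    finally show ?case using orth_Pj by simp
  qed
qed

end

lemma poly_nonneg_on_closed_interval:
  fixes f :: "real poly"
  assumes "lo < hi" "\<forall>x\<in>{lo<..<hi}. poly f x \<ge> 0"
  shows "\<forall>x\<in>{lo..hi}. poly f x \<ge> 0"
proof -
  have "closed {x. 0 \<le> poly f x}"
    by (intro closed_Collect_le) (auto intro: continuous_intros)
  then have "closure {lo<..<hi} \<subseteq> {x. 0 \<le> poly f x}"
    using assms(2) by (intro closure_minimal) auto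
  then show ?thesis using closure_greaterThanLessThan[OF assms(1)] by auto
qed

lemma poly_constant_sign_if_no_zeros:
  fixes f :: "real poly"
  assumes "\<forall>z\<in>{lo<..<hi}. poly f z \<noteq> 0"
  shows "(\<forall>x\<in>{lo<..<hi}. poly f x \<ge> 0) \<or> (\<forall>x\<in>{lo<..<hi}. poly f x \<le> 0)"
proof (rule ccontr)
  assume "\<not> ?thesis"
  then obtain x y where xy: "x\<in>{lo<..<hi}" "y\<in>{lo<..<hi}" "poly f x < 0" "poly f y > 0"
    by (auto simp: not_le)
  have "\<exists>z. min x y \<le> z \<and> z \<le> max x y \<and> poly f z = 0"
    using IVT[of "poly f" x 0 y] IVT2[of "poly f" x 0 y] xy
    by (cases "x \<le> y") (auto simp: min_def max_def)
  then show False using assms xy by (auto simp: min_def max_def split: if_splits)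
qed

lemma poly_constant_sign_if_even_orders:
  fixes f :: "real poly"
  assumes "f \<noteq> 0" "\<forall>z. lo < z \<and> z < hi \<and> poly f z = 0 \<longrightarrow> even (order z f)"
  shows "(\<forall>x\<in>{lo<..<hi}. poly f x \<ge> 0) \<or> (\<forall>x\<in>{lo<..<hi}. poly f x \<le> 0)"
  using assms
proof (induction "degree f" arbitrary: f rule: less_induct)
  case less
  show ?case
  proof (cases "\<exists>z. lo < z \<and> z < hi \<and> poly f z = 0")
    case False
    then show ?thesis by (intro poly_constant_sign_if_no_zeros) auto
  next
    case True
    then obtain z where z: "lo < z" "z < hi" "poly f z = 0" by blast
    define k where "k = order z f"
    obtain g where g: "f = [:-z,1:]^k * g" "\<not> [:-z,1:] dvd g"
      using order_decomp[OF less.prems(1), of z] k_def by blast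
    have "even k" using less.prems(2) z k_def by blast
    have "k \<noteq> 0" using z less.prems(1) k_def order_root by blast
    have "g \<noteq> 0" using g(2) by auto
    have "poly g z \<noteq> 0" using g(2) by (simp add: poly_eq_0_iff_dvd)
    have "degree f = k + degree g" using g \<open>g \<noteq> 0\<close>
      by (simp add: degree_mult_eq degree_power_eq degree_linear_power)
    then have "degree g < degree f" using \<open>k \<noteq> 0\<close> by simp
    moreover have "\<forall>w. lo < w \<and> w < hi \<and> poly g w = 0 \<longrightarrow> even (order w g)"
    proof (intro allI impI)
      fix w assume w: "lo < w \<and> w < hi \<and> poly g w = 0"
      then have "w \<noteq> z" using \<open>poly g z \<noteq> 0\<close> by auto
      have "order w f = order w ([:-z,1:]^k) + order w g"
        using g less.prems(1) by (metis order_mult)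
      moreover have "order w ([:-z,1:]^k) = 0"
        using \<open>w \<noteq> z\<close> by (intro order_0I) simp
      moreover have "even (order w f)" using less.prems(2) g w by simp
      ultimately show "even (order w g)" by simp
    qed
    ultimately have IH: "(\<forall>x\<in>{lo<..<hi}. poly g x \<ge> 0) \<or> (\<forall>x\<in>{lo<..<hi}. poly g x \<le> 0)"
      using less.hyps \<open>g \<noteq> 0\<close> by blast
    have "\<And>x. (x - z)^k \<ge> 0" using \<open>even k\<close> by (simp add: zero_le_even_power)
    moreover have "\<And>x. poly f x = (x - z)^k * poly g x" using g by (simp add: poly_power)
    ultimately show ?thesis using IH by (auto simp: mult_nonneg_nonneg mult_nonneg_nonpos)
  qed
qed

lemma order_prod_linear_factors:
  fixes S :: "real set"
  assumes "finite S"
  shows "order z (\<Prod>w\<in>S. [:-w,1:]) = (if z \<in> S then 1 else 0)"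
  using assms
proof (induction S rule: finite_induct)
  case (insert w S)
  have "(\<Prod>w\<in>S. [:-w,1:]) \<noteq> (0::real poly)"
    using insert.hyps(1) by (subst prod_zero_iff) auto
  moreover have "[:-w,1:] \<noteq> (0::real poly)" by simp
  ultimately have "[:-w,1:] * (\<Prod>w\<in>S. [:-w,1:]) \<noteq> 0" by (metis mult_eq_0_iff)
  then have "order z (\<Prod>w\<in>insert w S. [:-w,1:]) = order z [:-w,1:] + order z (\<Prod>w\<in>S. [:-w,1:])"
    by (simp only: prod.insert[OF insert.hyps]) (rule order_mult)
  moreover have "order z [:-w,1:] = (if z = w then 1 else 0)"
    using order_power_n_n[of w 1] by (auto simp: order_0I)
  ultimately show ?case using insert by auto
qed simp

lemma even_orders_mult_prod_odd_zeros:
  fixes p :: "real poly" and lo hi :: real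
  assumes "p \<noteq> 0"
  defines "q \<equiv> \<Prod>w\<in>{z. lo < z \<and> z < hi \<and> poly p z = 0 \<and> odd (order z p)}. [:-w,1:]"
  shows "\<forall>z. lo < z \<and> z < hi \<and> poly (p * q) z = 0 \<longrightarrow> even (order z (p * q))"
proof (intro allI impI)
  define S where "S = {z. lo < z \<and> z < hi \<and> poly p z = 0 \<and> odd (order z p)}"
  have "finite S" unfolding S_def using poly_roots_finite[OF assms(1)]
    by (rule finite_subset[rotated]) blast
  then have "q \<noteq> 0" unfolding q_def S_def[symmetric] by (simp add: prod_zero_iff)
  have order_q: "order z q = (if z \<in> S then 1 else 0)" for z
    unfolding q_def S_def[symmetric] using order_prod_linear_factors[OF \<open>finite S\<close>] by simp
  fix z assume z: "lo < z \<and> z < hi \<and> poly (p * q) z = 0"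
  have "order z (p * q) = order z p + order z q"
    using assms(1) \<open>q \<noteq> 0\<close> by (simp add: order_mult)
  moreover have "poly q z = 0 \<Longrightarrow> z \<in> S"
    using order_root[of q z] \<open>q \<noteq> 0\<close> order_q by (auto split: if_splits)
  ultimately show "even (order z (p * q))"
    using z order_q[of z] unfolding S_def by (cases "poly p z = 0") auto
qed

locale positive_poly_functional = linear_poly_functional +
  fixes lo hi :: real
  assumes lo_less_hi: "lo < hi"
    and pos: "p \<noteq> 0 \<Longrightarrow> \<forall>x\<in>{lo..hi}. poly p x \<ge> 0 \<Longrightarrow> L p > 0"
begin

lemma square_pos: "p \<noteq> 0 \<Longrightarrow> L (p * p) > 0"
  by (intro pos) auto

lemma orth_lower_unique:
  assumes "degree D \<le> k" "\<forall>r. degree r < k \<longrightarrow> L (D * r) = 0"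
    and "degree P = k" "lead_coeff P = 1" "orth_lower L P k"
  shows "D = smult (coeff D k) P"
proof (rule ccontr)
  define E where "E = D - smult (coeff D k) P"
  assume "D \<noteq> smult (coeff D k) P"
  then have "E \<noteq> 0" unfolding E_def by simp
  have "degree E \<le> k" unfolding E_def using assms
    by (metis degree_diff_le degree_smult_le)
  moreover have "coeff E k = 0" unfolding E_def using assms by simp
  ultimately have "degree E < k" using \<open>E \<noteq> 0\<close>
    by (metis le_neq_implies_less leading_coeff_0_iff)
  have "E * E = (D - smult (coeff D k) P) * E" by (simp add: E_def)
  also have "\<dots> = D * E - smult (coeff D k) (P * E)" by (simp add: algebra_simps)
  finally have "E * E = D * E - smult (coeff D k) (P * E)" .
  then have "L (E * E) = L (D * E) - coeff D k * L (P * E)" by (simp add: diff smult)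
  also have "\<dots> = 0" using assms(2,5) \<open>degree E < k\<close> unfolding orth_lower_def by simp
  finally show False using square_pos[OF \<open>E \<noteq> 0\<close>] by simp
qed

text \<open>A polynomial orthogonal to all lower degrees changes sign at least \<open>m\<close> times in \<open>(lo, hi)\<close>:
  otherwise multiplying by the product over its odd-order zeros there would give a polynomial of
  constant sign whose functional value vanishes.\<close>
lemma orth_lower_card_odd_zeros:
  assumes "p \<noteq> 0" "orth_lower L p m"
  shows "m \<le> card {z. lo < z \<and> z < hi \<and> poly p z = 0 \<and> odd (order z p)}"
    (is "_ \<le> card ?S")
proof (rule ccontr)
  define q where "q = (\<Prod>w\<in>?S. [:-w,1:])"
  have "finite ?S" using poly_roots_finite[OF assms(1)] by (rule finite_subset[rotated]) blast
  then have "q \<noteq> 0" "degree q = card ?S"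
    unfolding q_def by (simp_all add: prod_zero_iff degree_prod_eq_sum_degree)
  then have "p * q \<noteq> 0" using assms(1) by simp
  assume "\<not> m \<le> card ?S"
  then have "L (p * q) = 0"
    using assms(2) \<open>degree q = card ?S\<close> unfolding orth_lower_def by simp
  from poly_constant_sign_if_even_orders[OF \<open>p * q \<noteq> 0\<close>
      even_orders_mult_prod_odd_zeros[of p lo hi, OF assms(1), folded q_def]]
  have "(\<forall>x\<in>{lo..hi}. poly (p*q) x \<ge> 0) \<or> (\<forall>x\<in>{lo..hi}. poly (-(p*q)) x \<ge> 0)"
    using poly_nonneg_on_closed_interval[OF lo_less_hi, of "p*q"]
      poly_nonneg_on_closed_interval[OF lo_less_hi, of "-(p*q)"] by auto
  moreover have "- (p * q) \<noteq> 0" using \<open>p * q \<noteq> 0\<close> by simp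
  ultimately have "L (p*q) > 0 \<or> L (-(p*q)) > 0"
    using pos \<open>p * q \<noteq> 0\<close> by blast
  then show False using \<open>L (p * q) = 0\<close> minus by simp
qed

lemma orth_lower_zeros:
  assumes "degree p = m" "lead_coeff p = 1" "orth_lower L p m"
  shows "card {x. poly p x = 0} = m \<and> {x. poly p x = 0} \<subseteq> {lo<..<hi}"
proof -
  define R S where "R = {x. poly p x = 0}"
    and "S = {z. lo < z \<and> z < hi \<and> poly p z = 0 \<and> odd (order z p)}"
  have "p \<noteq> 0" using assms by auto
  then have "finite R" "card R \<le> m"
    unfolding R_def using poly_roots_finite card_poly_roots_bound assms(1) by auto
  moreover have "S \<subseteq> R" "m \<le> card S"
    unfolding S_def R_def using orth_lower_card_odd_zeros[OF \<open>p \<noteq> 0\<close> assms(3)] by auto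
  ultimately have "S = R" "card R = m"
    using card_mono[of R S] card_subset_eq[of R S] by auto
  moreover have "S \<subseteq> {lo<..<hi}" unfolding S_def by auto
  ultimately show ?thesis unfolding R_def by simp
qed

end

section \<open>The Christoffel--Darboux kernel\<close>

lemma degree_synthetic_div_less:
  fixes p :: "real poly"
  assumes "degree p \<le> m"
  shows "synthetic_div p y = 0 \<or> degree (synthetic_div p y) < m"
  using assms by (cases "degree p = 0") (auto simp: synthetic_div_eq_0_iff degree_synthetic_div)

lemma synthetic_div_monic:
  fixes p :: "real poly"
  assumes "degree p = Suc m" "lead_coeff p = 1"
  shows "degree (synthetic_div p y) = m" "lead_coeff (synthetic_div p y) = 1"
proof -
  define s where "s = synthetic_div p y"
  show "degree s = m" unfolding s_def using assms by (simp add: degree_synthetic_div)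
  have eq: "p = [:-y,1:] * s + [:poly p y:]" unfolding s_def using synthetic_div_correct'[of y p] by simp
  have "coeff p (Suc m) = coeff ([:-y,1:] * s) (Suc m)" by (subst eq) simp
  also have "\<dots> = coeff s m - y * coeff s (Suc m)" by (simp add: mult_pCons_left)
  finally show "lead_coeff s = 1" using assms \<open>degree s = m\<close> by (simp add: coeff_eq_0)
qed

lemma linear_mult_synthetic_div:
  fixes p :: "'a::comm_ring_1 poly"
  shows "[:-y,1:] * synthetic_div p y = p - [:poly p y:]"
  using synthetic_div_correct'[of y p] by (metis add_diff_cancel_right')

lemma poly_synthetic_div_self:
  fixes p :: "'a::idom poly"
  shows "poly (synthetic_div p y) y = poly (pderiv p) y"
proof -
  have "pderiv p = pderiv ([:-y,1:] * synthetic_div p y + [:poly p y:])"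
    using synthetic_div_correct'[of y p] by simp
  also have "\<dots> = [:-y,1:] * pderiv (synthetic_div p y) + synthetic_div p y"
    by (simp add: pderiv_add pderiv_mult pderiv_pCons)
  finally show ?thesis by simp
qed

lemma monic_diff_degree_less:
  fixes p q :: "real poly"
  assumes "degree p = k" "lead_coeff p = 1" "degree q = k" "lead_coeff q = 1"
  shows "p - q = 0 \<or> degree (p - q) < k"
proof -
  have "degree (p - q) \<le> k" using assms by (metis degree_diff_le order_refl)
  moreover have "coeff (p - q) k = 0" using assms by simp
  ultimately show ?thesis by (metis le_neq_implies_less leading_coeff_0_iff)
qed

text \<open>The Christoffel--Darboux kernel \<open>(P(y) A(x) - A(y) P(x)) / (x - y)\<close> of two consecutive
  (quasi-)orthogonal polynomials.\<close>
definition christoffel_kernel :: "real poly \<Rightarrow> real poly \<Rightarrow> real \<Rightarrow> real poly" where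
  "christoffel_kernel A P y = smult (poly P y) (synthetic_div A y) - smult (poly A y) (synthetic_div P y)"

lemma linear_mult_christoffel_kernel:
  "[:-y,1:] * christoffel_kernel A P y = smult (poly P y) A - smult (poly A y) P"
proof -
  have "[:-y,1:] * christoffel_kernel A P y
      = smult (poly P y) ([:-y,1:] * synthetic_div A y) - smult (poly A y) ([:-y,1:] * synthetic_div P y)"
    unfolding christoffel_kernel_def by (simp only: right_diff_distrib mult_smult_right)
  also have "\<dots> = smult (poly P y) (A - [:poly A y:]) - smult (poly A y) (P - [:poly P y:])"
    by (simp only: linear_mult_synthetic_div)
  finally show ?thesis by (simp add: smult_diff_right mult.commute)
qed

lemma poly_christoffel_kernel_self:
  "poly (christoffel_kernel A P y) y = poly (pderiv A) y * poly P y - poly A y * poly (pderiv P) y"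
  unfolding christoffel_kernel_def by (simp add: poly_synthetic_div_self)

lemma degree_christoffel_kernel:
  assumes "degree A = Suc m" "lead_coeff A = 1" "degree P = m"
  shows "degree (christoffel_kernel A P y) \<le> m" "coeff (christoffel_kernel A P y) m = poly P y"
proof -
  have "synthetic_div P y = 0 \<or> degree (synthetic_div P y) < m"
    using degree_synthetic_div_less[of P m] assms(3) by simp
  moreover note synthetic_div_monic[OF assms(1,2), of y]
  ultimately show "degree (christoffel_kernel A P y) \<le> m" "coeff (christoffel_kernel A P y) m = poly P y"
    unfolding christoffel_kernel_def
    by (metis degree_diff_le degree_smult_le le_trans less_imp_le_nat degree_0 le0,
        auto simp: coeff_eq_0)
qed

context linear_poly_functional begin

lemma christoffel_kernel_reproducing:
  assumes "orth_lower L A m" "orth_lower L P m" "degree f \<le> m"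
  shows "L (christoffel_kernel A P y * f) = poly f y * L (christoffel_kernel A P y)"
proof -
  define K where "K = christoffel_kernel A P y"
  define s where "s = synthetic_div f y"
  have "f = [:-y,1:] * s + [:poly f y:]" unfolding s_def using synthetic_div_correct'[of y f] by simp
  then have "K * f = ([:-y,1:] * K) * s + smult (poly f y) K"
    by (subst (1) \<open>f = _\<close>) (simp add: algebra_simps mult_pCons_right)
  also have "\<dots> = smult (poly P y) (A * s) - smult (poly A y) (P * s) + smult (poly f y) K"
    unfolding K_def linear_mult_christoffel_kernel by (simp only: left_diff_distrib mult_smult_left)
  finally have "L (K * f) = poly P y * L (A * s) - poly A y * L (P * s) + poly f y * L K"
    by (simp add: add diff smult)
  moreover have "s = 0 \<or> degree s < m" unfolding s_def using degree_synthetic_div_less[OF assms(3)] .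
  ultimately show ?thesis using orth_lowerD[OF assms(1)] orth_lowerD[OF assms(2)] unfolding K_def by simp
qed

end

context positive_poly_functional begin

text \<open>Positivity of the Wronskian \<open>A' P - A P'\<close>: the Christoffel kernel \<open>K\<close> reproduces values on
  polynomials of degree \<open>\<le> m\<close>, so \<open>0 < L (K * K) = K(y) L K = W(y) L (P * P)\<close>.\<close>
lemma wronskian_pos:
  assumes A: "degree A = Suc m" "lead_coeff A = 1" "orth_lower L A m"
    and P: "degree P = m" "lead_coeff P = 1" "orth_lower L P m"
    and Py: "poly P y \<noteq> 0"
  shows "poly (pderiv A) y * poly P y - poly A y * poly (pderiv P) y > 0"
proof -
  define K where "K = christoffel_kernel A P y"
  have "P \<noteq> 0" using P(2) by auto
  have "degree K \<le> m" "coeff K m = poly P y"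
    unfolding K_def using degree_christoffel_kernel[OF A(1,2) P(1)] by simp_all
  then have "K \<noteq> 0" using Py by auto
  define SA SP where "SA = synthetic_div A y" and "SP = synthetic_div P y"
  have "SA - P = 0 \<or> degree (SA - P) < m"
    unfolding SA_def using monic_diff_degree_less synthetic_div_monic[OF A(1,2)] P(1,2) by blast
  moreover have "SP = 0 \<or> degree SP < m"
    unfolding SP_def using degree_synthetic_div_less[of P m] P(1) by simp
  moreover have K_minus: "K - smult (poly P y) P = smult (poly P y) (SA - P) - smult (poly A y) SP"
    unfolding K_def christoffel_kernel_def SA_def SP_def by (simp add: smult_diff_right)
  have "L (P * (K - smult (poly P y) P)) = poly P y * L (P * (SA - P)) - poly A y * L (P * SP)"
    by (subst K_minus) (simp add: algebra_simps diff smult)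
  ultimately have "L (P * (K - smult (poly P y) P)) = 0" using orth_lowerD[OF P(3)] by simp
  then have "L (K * P) = poly P y * L (P * P)" by (simp add: algebra_simps diff smult)
  moreover have "L (K * P) = poly P y * L K"
    unfolding K_def using christoffel_kernel_reproducing[OF A(3) P(3)] P(1) by simp
  ultimately have "L K = L (P * P)" using Py by simp
  then have "L (K * K) = poly K y * L (P * P)"
    unfolding K_def using christoffel_kernel_reproducing[OF A(3) P(3) \<open>degree K \<le> m\<close>[unfolded K_def]]
    by simp
  moreover have "L (K * K) > 0" "L (P * P) > 0" using square_pos \<open>K \<noteq> 0\<close> \<open>P \<noteq> 0\<close> by auto
  ultimately show ?thesis
    unfolding K_def poly_christoffel_kernel_self by (metis zero_less_mult_pos2)
qed

lemma no_common_zero: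
  assumes A: "degree A = Suc m" "lead_coeff A = 1" "orth_lower L A m"
    and P: "degree P = m" "lead_coeff P = 1" "orth_lower L P m"
  shows "\<not> (poly A y = 0 \<and> poly P y = 0)"
proof
  assume z: "poly A y = 0 \<and> poly P y = 0"
  define SA SP where "SA = synthetic_div A y" and "SP = synthetic_div P y"
  have "m \<noteq> 0"
  proof
    assume "m = 0"
    then have "P = 1" using P by (metis One_nat_def coeff_pCons_0 degree_eq_zeroE lead_coeff_1 one_pCons)
    then show False using z by simp
  qed
  have A_eq: "A = [:-y,1:] * SA" and P_eq: "P = [:-y,1:] * SP"
    using z linear_mult_synthetic_div[of y A] linear_mult_synthetic_div[of y P] unfolding SA_def SP_def
    by simp_all
  have "degree SP < m" using P_eq P(1) \<open>m \<noteq> 0\<close> by (cases "SP = 0") (auto simp: degree_mult_eq)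
  have "L (P * SA) = L (A * SP)" by (subst P_eq, subst A_eq) (simp add: algebra_simps)
  also have "\<dots> = 0" using orth_lowerD[OF A(3)] \<open>degree SP < m\<close> by simp
  finally have "L (P * SA) = 0" .
  moreover have "L (P * SA) = L (P * P) + L (P * (SA - P))" by (simp add: algebra_simps flip: add)
  moreover have "L (P * (SA - P)) = 0"
    using orth_lowerD[OF P(3)] monic_diff_degree_less synthetic_div_monic[OF A(1,2)] P(1,2)
    unfolding SA_def by blast
  moreover have "P \<noteq> 0" using P(2) by auto
  ultimately show False using square_pos[of P] by simp
qed

end

section \<open>The pencil through \<open>(x - c) P\<^sub>n\<^sub>-\<^sub>1\<^sup>c\<^sup>,\<^sup>[\<^sup>1\<^sup>]\<close> and \<open>P\<^sub>n\<^sub>-\<^sub>1\<close>\<close>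

lemma strict_mono_bounded_nat_eq_id:
  fixes f :: "nat \<Rightarrow> nat"
  assumes mono: "\<And>i j. i < j \<Longrightarrow> j < n \<Longrightarrow> f i < f j" and bounded: "\<And>i. i < n \<Longrightarrow> f i < n"
    and "i < n"
  shows "f i = i"
proof -
  have ge: "i < n \<Longrightarrow> f i \<ge> i" for i
    by (induction i) (use mono in \<open>auto simp: Suc_le_eq intro: le_less_trans\<close>)
  have le: "k < n \<Longrightarrow> f (n - 1 - k) \<le> n - 1 - k" for k
  proof (induction k)
    case (Suc k)
    then have "f (n - 1 - Suc k) < f (n - 1 - k)" using mono[of "n - 1 - Suc k" "n - 1 - k"] by simp
    then show ?case using Suc by simp
  qed (use bounded[of "n - 1"] in simp)
  show ?thesis using le[of "n - 1 - i"] ge[of i] \<open>i < n\<close> by simp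
qed

text \<open>\<open>L\<close> is the functional \<open>h \<mapsto> \<integral> h(x) / (x - c) d\<mu>\<close> of the Geronimus transform \<open>\<nu>\<close>;
  the inner products of \<open>\<mu>\<close>, \<open>(x - c) d\<mu>\<close> and of the Uvarov transform \<open>\<nu>\<^sub>N\<close> are all expressed
  through it.\<close>
locale geronimus_uvarov =
  fixes L :: "real poly \<Rightarrow> real" and a b c :: real and P Q P1 :: "nat \<Rightarrow> real poly"
    and QN :: "real \<Rightarrow> nat \<Rightarrow> real poly" and n :: nat
  assumes positive: "positive_poly_functional L a b"
    and c_less_a: "c < a"
    and MOPS_P: "is_MOPS (\<lambda>f g. L ([:-c,1:] * (f * g))) P"
    and MOPS_Q: "is_MOPS (\<lambda>f g. L (f * g)) Q"
    and MOPS_P1: "is_MOPS (\<lambda>f g. L ([:-c,1:]^2 * (f * g))) P1"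
    and MOPS_QN: "\<forall>N>0. is_MOPS (\<lambda>f g. L (f * g) + N * poly (f * g) c) (QN N)"
    and n_ge_1: "n \<ge> 1"
begin

sublocale nu: positive_poly_functional L a b by (rule positive)

definition L_mu :: "real poly \<Rightarrow> real" where "L_mu h = L ([:-c,1:] * h)"
definition L_ker :: "real poly \<Rightarrow> real" where "L_ker h = L ([:-c,1:]^2 * h)"
definition L_N :: "real \<Rightarrow> real poly \<Rightarrow> real" where "L_N N h = L h + N * poly h c"

definition m :: nat where "m = n - 1"
definition Pm :: "real poly" where "Pm = P m"
definition A :: "real poly" where "A = [:-c,1:] * P1 m"

lemma n_eq_Suc_m: "n = Suc m"
  using n_ge_1 unfolding m_def by simp

lemma positive_poly_functional_weighted:
  assumes "\<forall>x\<in>{a..b}. poly w x \<ge> 0" "w \<noteq> 0"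
  shows "positive_poly_functional (\<lambda>h. L (w * h)) a b"
proof unfold_locales
  fix p q :: "real poly" and r :: real
  show "L (w * (p + q)) = L (w * p) + L (w * q)" by (simp add: distrib_left nu.add)
  show "L (w * smult r p) = r * L (w * p)" by (simp add: nu.smult)
  show "a < b" by (rule nu.lo_less_hi)
  assume "p \<noteq> 0" "\<forall>x\<in>{a..b}. 0 \<le> poly p x"
  then show "0 < L (w * p)"
    using assms by (intro nu.pos) auto
qed

sublocale mu: positive_poly_functional L_mu a b
  unfolding L_mu_def by (rule positive_poly_functional_weighted) (use c_less_a in auto)

sublocale ker: positive_poly_functional L_ker a b
  unfolding L_ker_def by (rule positive_poly_functional_weighted) (use c_less_a in auto)

lemma positive_L_N:
  assumes "N > 0"
  shows "positive_poly_functional (L_N N) c b"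
proof unfold_locales
  fix p q :: "real poly" and r :: real
  show "L_N N (p + q) = L_N N p + L_N N q" "L_N N (smult r p) = r * L_N N p"
    by (simp_all add: L_N_def algebra_simps nu.add nu.smult)
  show "c < b" using nu.lo_less_hi c_less_a by simp
  assume p: "p \<noteq> 0" "\<forall>x\<in>{c..b}. 0 \<le> poly p x"
  then have "L p > 0" using c_less_a by (intro nu.pos) auto
  moreover have "N * poly p c \<ge> 0" using p assms nu.lo_less_hi c_less_a by auto
  ultimately show "0 < L_N N p" unfolding L_N_def by simp
qed

lemma orth_P: "orth_lower L_mu (P k) k"
  by (rule mu.MOPS_orth_lower) (use MOPS_P in \<open>simp add: L_mu_def\<close>)

lemma orth_Q: "orth_lower L (Q k) k"
  by (rule nu.MOPS_orth_lower) (use MOPS_Q in simp)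

lemma orth_P1: "orth_lower L_ker (P1 k) k"
  by (rule ker.MOPS_orth_lower) (use MOPS_P1 in \<open>simp add: L_ker_def\<close>)

lemma orth_QN:
  assumes "N > 0"
  shows "orth_lower (L_N N) (QN N k) k"
proof -
  interpret positive_poly_functional "L_N N" c b by (rule positive_L_N[OF assms])
  show ?thesis by (rule MOPS_orth_lower) (use MOPS_QN assms in \<open>simp add: L_N_def\<close>)
qed

lemma P_monic: "degree (P k) = k" "lead_coeff (P k) = 1"
  using MOPS_P unfolding is_MOPS_def by metis+

lemma Q_monic: "degree (Q k) = k" "lead_coeff (Q k) = 1"
  using MOPS_Q unfolding is_MOPS_def by metis+

lemma P1_monic: "degree (P1 k) = k" "lead_coeff (P1 k) = 1"
  using MOPS_P1 unfolding is_MOPS_def by metis+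

lemma QN_monic: "N > 0 \<Longrightarrow> degree (QN N k) = k" "N > 0 \<Longrightarrow> lead_coeff (QN N k) = 1"
  using MOPS_QN unfolding is_MOPS_def by metis+

lemma zeros_P: "card {x. poly (P k) x = 0} = k \<and> {x. poly (P k) x = 0} \<subseteq> {a<..<b}"
  by (rule mu.orth_lower_zeros[OF P_monic orth_P])

lemma zeros_Q: "card {x. poly (Q k) x = 0} = k \<and> {x. poly (Q k) x = 0} \<subseteq> {a<..<b}"
  by (rule nu.orth_lower_zeros[OF Q_monic orth_Q])

lemma zeros_P1: "card {x. poly (P1 k) x = 0} = k \<and> {x. poly (P1 k) x = 0} \<subseteq> {a<..<b}"
  by (rule ker.orth_lower_zeros[OF P1_monic orth_P1])

lemma zeros_QN:
  "N > 0 \<Longrightarrow> card {x. poly (QN N k) x = 0} = k \<and> {x. poly (QN N k) x = 0} \<subseteq> {c<..<b}"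
  by (rule positive_poly_functional.orth_lower_zeros[OF positive_L_N QN_monic orth_QN])

lemma Pm_monic: "degree Pm = m" "lead_coeff Pm = 1"
  unfolding Pm_def using P_monic by auto

lemma Pm_nonzero: "Pm \<noteq> 0"
  using Pm_monic by auto

lemma A_monic: "degree A = Suc m" "lead_coeff A = 1"
proof -
  have "P1 m \<noteq> 0" using P1_monic[of m] by auto
  then show "degree A = Suc m" unfolding A_def using P1_monic[of m] by (simp add: degree_mult_eq)
  show "lead_coeff A = 1" unfolding A_def lead_coeff_mult using P1_monic[of m] by simp
qed

lemma orth_A: "orth_lower L_mu A m"
  unfolding orth_lower_def
proof (intro allI impI)
  fix r :: "real poly" assume "degree r < m"
  then have "L_ker (P1 m * r) = 0" using orth_P1 unfolding orth_lower_def by blast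
  moreover have "[:-c,1:] * (A * r) = [:-c,1:]^2 * (P1 m * r)"
    unfolding A_def power2_eq_square by (simp only: mult.assoc)
  ultimately show "L_mu (A * r) = 0" unfolding L_mu_def L_ker_def by (simp only:)
qed

lemma orth_Pm: "orth_lower L_mu Pm m"
  unfolding Pm_def by (rule orth_P)

lemma poly_A_c: "poly A c = 0"
  unfolding A_def by simp

definition pencil :: "real \<Rightarrow> real poly" where "pencil t = A + smult t Pm"
definition t_Q :: real where "t_Q = coeff (Q n - A) m"
definition t_N :: "real \<Rightarrow> real" where "t_N N = coeff (QN N n - A) m"

lemma monic_orth_linear_multiples_eq_pencil:
  assumes F: "degree F = n" "lead_coeff F = 1"
    and orth: "\<And>r. degree r < m \<Longrightarrow> L (F * ([:-c,1:] * r)) = 0"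
  shows "F = pencil (coeff (F - A) m)"
proof -
  have "F - A = 0 \<or> degree (F - A) < n"
    by (rule monic_diff_degree_less[OF F]) (use A_monic n_eq_Suc_m in simp_all)
  then have "degree (F - A) \<le> m" using n_eq_Suc_m by auto
  moreover have "\<forall>r. degree r < m \<longrightarrow> L_mu ((F - A) * r) = 0"
  proof (intro allI impI)
    fix r :: "real poly" assume "degree r < m"
    have "L_mu ((F - A) * r) = L (F * ([:-c,1:] * r)) - L_mu (A * r)"
      unfolding L_mu_def by (simp add: algebra_simps nu.diff)
    then show "L_mu ((F - A) * r) = 0"
      using orth[OF \<open>degree r < m\<close>] orth_A \<open>degree r < m\<close> unfolding orth_lower_def by simp
  qed
  ultimately have "F - A = smult (coeff (F - A) m) Pm"
    by (rule mu.orth_lower_unique[OF _ _ Pm_monic orth_Pm])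
  then show ?thesis unfolding pencil_def by (simp add: algebra_simps)
qed

lemma degree_linear_mult_less: "degree (r::real poly) < m \<Longrightarrow> degree ([:-c,1:] * r) < n"
  using n_eq_Suc_m by (cases "r = 0") (auto simp: degree_mult_eq)

lemma Q_eq_pencil: "Q n = pencil t_Q"
  unfolding t_Q_def
proof (rule monic_orth_linear_multiples_eq_pencil[OF Q_monic])
  fix r :: "real poly" assume "degree r < m"
  then show "L (Q n * ([:-c,1:] * r)) = 0"
    using orth_Q degree_linear_mult_less unfolding orth_lower_def by blast
qed

lemma QN_eq_pencil: "N > 0 \<Longrightarrow> QN N n = pencil (t_N N)"
  unfolding t_N_def
proof (rule monic_orth_linear_multiples_eq_pencil[OF QN_monic])
  fix r :: "real poly" assume "N > 0" "degree r < m"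
  then have "L_N N (QN N n * ([:-c,1:] * r)) = 0"
    using orth_QN degree_linear_mult_less unfolding orth_lower_def by blast
  then show "L (QN N n * ([:-c,1:] * r)) = 0" unfolding L_N_def by simp
qed

lemma pencil_0: "pencil 0 = A"
  unfolding pencil_def by simp

definition wronskian :: "real \<Rightarrow> real" where
  "wronskian x = poly (pderiv A) x * poly Pm x - poly A x * poly (pderiv Pm) x"

text \<open>The zeros of \<open>pencil t\<close> are the solutions of \<open>ratio x = t\<close>.\<close>
definition ratio :: "real \<Rightarrow> real" where "ratio x = - (poly A x / poly Pm x)"

definition poles_below :: "real \<Rightarrow> nat" where
  "poles_below x = card {p. poly Pm p = 0 \<and> p < x}"

definition pencil_zero :: "real \<Rightarrow> nat \<Rightarrow> real" where
  "pencil_zero t k = zero_k (pencil t) k"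

definition real_rooted :: "real \<Rightarrow> bool" where
  "real_rooted t \<longleftrightarrow> card {x. poly (pencil t) x = 0} = n"

lemma wronskian_pos: "poly Pm y \<noteq> 0 \<Longrightarrow> wronskian y > 0"
  unfolding wronskian_def by (rule mu.wronskian_pos[OF A_monic orth_A Pm_monic orth_Pm])

lemma A_Pm_no_common_zero: "\<not> (poly A y = 0 \<and> poly Pm y = 0)"
  by (rule mu.no_common_zero[OF A_monic orth_A Pm_monic orth_Pm])

lemma finite_poles_below: "finite {p. poly Pm p = 0 \<and> p < x}"
  using poly_roots_finite[OF Pm_nonzero] by (rule finite_subset[rotated]) blast

lemma poles_below_mono: "x \<le> y \<Longrightarrow> poles_below x \<le> poles_below y"
  unfolding poles_below_def by (rule card_mono[OF finite_poles_below]) auto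

lemma poles_below_le: "poles_below x \<le> m"
proof -
  have "poles_below x \<le> card {p. poly Pm p = 0}"
    unfolding poles_below_def by (rule card_mono[OF poly_roots_finite[OF Pm_nonzero]]) auto
  then show ?thesis using zeros_P[of m] unfolding Pm_def by simp
qed

lemma poles_below_strict_mono:
  assumes "poly Pm z = 0" "x \<le> z" "z < y"
  shows "poles_below x < poles_below y"
  unfolding poles_below_def
proof (rule psubset_card_mono[OF finite_poles_below])
  have "z \<in> {p. poly Pm p = 0 \<and> p < y}" "z \<notin> {p. poly Pm p = 0 \<and> p < x}"
    using assms by auto
  then show "{p. poly Pm p = 0 \<and> p < x} \<subset> {p. poly Pm p = 0 \<and> p < y}"
    using assms by fastforce
qed

lemma ratio_has_derivative:
  assumes "poly Pm z \<noteq> 0"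
  shows "DERIV ratio z :> - (wronskian z / (poly Pm z * poly Pm z))"
  unfolding ratio_def wronskian_def
  by (auto intro!: derivative_eq_intros simp: assms)

lemma ratio_decreasing:
  assumes "x < y" "\<And>z. x \<le> z \<Longrightarrow> z \<le> y \<Longrightarrow> poly Pm z \<noteq> 0"
  shows "ratio y < ratio x"
proof (rule DERIV_neg_imp_decreasing[OF assms(1)])
  fix z assume "x \<le> z" "z \<le> y"
  then have "poly Pm z \<noteq> 0" by (rule assms(2))
  moreover have "poly Pm z * poly Pm z > 0" using \<open>poly Pm z \<noteq> 0\<close> not_real_square_gt_zero by blast
  ultimately have "wronskian z / (poly Pm z * poly Pm z) > 0" using wronskian_pos by simp
  then show "\<exists>r. DERIV ratio z :> r \<and> r < 0"
    using ratio_has_derivative[OF \<open>poly Pm z \<noteq> 0\<close>] by auto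
qed

lemma ratio_decreasing_between_poles:
  assumes "x < y" "poly Pm y \<noteq> 0" "poles_below x = poles_below y"
  shows "ratio y < ratio x"
proof (rule ratio_decreasing[OF assms(1)])
  fix z assume z: "x \<le> z" "z \<le> y"
  show "poly Pm z \<noteq> 0"
  proof
    assume "poly Pm z = 0"
    moreover have "z < y" using z assms(2) \<open>poly Pm z = 0\<close> by (cases "z = y") auto
    ultimately show False using poles_below_strict_mono[OF _ z(1)] assms(3) by fastforce
  qed
qed

lemma pencil_root_ratio:
  assumes "poly (pencil t) x = 0"
  shows "poly Pm x \<noteq> 0" "ratio x = t"
proof -
  have eq: "poly A x + t * poly Pm x = 0" using assms unfolding pencil_def by simp
  then show "poly Pm x \<noteq> 0" using A_Pm_no_common_zero by force
  then show "ratio x = t" unfolding ratio_def using eq by (simp add: field_simps)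
qed

lemma poles_below_strict_mono_on_roots:
  assumes "poly (pencil t) x = 0" "poly (pencil t) y = 0" "x < y"
  shows "poles_below x < poles_below y"
proof (rule ccontr)
  assume "\<not> ?thesis"
  then have "poles_below x = poles_below y"
    using poles_below_mono[of x y] assms(3) by simp
  then have "ratio y < ratio x"
    using ratio_decreasing_between_poles[OF assms(3) pencil_root_ratio(1)[OF assms(2)]] by simp
  then show False using pencil_root_ratio(2) assms(1,2) by simp
qed

lemma real_rooted_pencil_zero:
  assumes "real_rooted t" and k: "1 \<le> k" "k \<le> n"
  shows "poly (pencil t) (pencil_zero t k) = 0" "poly Pm (pencil_zero t k) \<noteq> 0"
    "ratio (pencil_zero t k) = t" "poles_below (pencil_zero t k) = k - 1"
proof -
  define Z where "Z = {x. poly (pencil t) x = 0}"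
  have "card Z = n" using assms(1) unfolding real_rooted_def Z_def .
  then have "finite Z" using n_ge_1 card.infinite by fastforce
  define xs where "xs = sorted_list_of_set Z"
  have "length xs = n" "sorted_wrt (<) xs" unfolding xs_def using \<open>card Z = n\<close> by simp_all
  have root: "poly (pencil t) (xs ! i) = 0" if "i < n" for i
    using nth_mem[of i xs] that \<open>length xs = n\<close> \<open>finite Z\<close> unfolding xs_def Z_def by simp
  have "poles_below (xs ! (k - 1)) = k - 1"
  proof (rule strict_mono_bounded_nat_eq_id[where f="\<lambda>i. poles_below (xs ! i)" and n=n])
    fix i j assume "i < j" "j < n"
    then have "xs ! i < xs ! j"
      using sorted_wrt_nth_less[OF \<open>sorted_wrt (<) xs\<close>] \<open>length xs = n\<close> by simp
    then show "poles_below (xs ! i) < poles_below (xs ! j)"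
      using poles_below_strict_mono_on_roots[OF root root] \<open>i < j\<close> \<open>j < n\<close> by simp
  next
    show "poles_below (xs ! i) < n" for i using poles_below_le[of "xs ! i"] n_eq_Suc_m by simp
  qed (use k in simp)
  moreover have "pencil_zero t k = xs ! (k - 1)"
    unfolding pencil_zero_def zero_k_def xs_def Z_def ..
  moreover have "poly (pencil t) (xs ! (k - 1)) = 0" using root k by simp
  ultimately show "poly (pencil t) (pencil_zero t k) = 0" "poly Pm (pencil_zero t k) \<noteq> 0"
    "ratio (pencil_zero t k) = t" "poles_below (pencil_zero t k) = k - 1"
    using pencil_root_ratio by simp_all
qed

lemma pencil_zero_decreasing:
  assumes "real_rooted s" "real_rooted t" "s < t" "1 \<le> k" "k \<le> n"
  shows "pencil_zero t k < pencil_zero s k"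
proof (rule ccontr)
  note zs = real_rooted_pencil_zero[OF assms(1,4,5)] and zt = real_rooted_pencil_zero[OF assms(2,4,5)]
  assume "\<not> ?thesis"
  then have "pencil_zero s k < pencil_zero t k"
    using zs(3) zt(3) \<open>s < t\<close> by (cases "pencil_zero s k = pencil_zero t k") auto
  from ratio_decreasing_between_poles[OF this zt(2)] show False
    using zs zt \<open>s < t\<close> by simp
qed

lemma pencil_zero_interlacing:
  assumes "real_rooted s" "real_rooted t" "1 \<le> k" "k < n"
  shows "pencil_zero s k < pencil_zero t (Suc k)"
proof (rule ccontr)
  assume "\<not> ?thesis"
  then have "poles_below (pencil_zero t (Suc k)) \<le> poles_below (pencil_zero s k)"
    by (simp add: poles_below_mono)
  then show False
    using real_rooted_pencil_zero(4)[OF assms(1), of k] real_rooted_pencil_zero(4)[OF assms(2), of "Suc k"]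
      assms(3,4) by simp
qed

lemma pencil_t_Q: "pencil t_Q = Q n"
  using Q_eq_pencil by simp

lemma pencil_t_N: "N > 0 \<Longrightarrow> pencil (t_N N) = QN N n"
  using QN_eq_pencil by simp

lemma real_rooted_t_Q: "real_rooted t_Q"
  unfolding real_rooted_def pencil_t_Q using zeros_Q[of n] by simp

lemma real_rooted_t_N: "N > 0 \<Longrightarrow> real_rooted (t_N N)"
  unfolding real_rooted_def using pencil_t_N zeros_QN[of N n] by simp

lemma zeros_A: "{x. poly A x = 0} = insert c {x. poly (P1 m) x = 0}"
  unfolding A_def by auto

lemma c_less_zeros_P1: "x \<in> {x. poly (P1 m) x = 0} \<Longrightarrow> c < x"
  using zeros_P1[of m] c_less_a by auto

lemma finite_zeros_P1: "finite {x. poly (P1 m) x = 0}"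
  by (rule poly_roots_finite) (use P1_monic[of m] in auto)

lemma sorted_zeros_A:
  "sorted_list_of_set {x. poly A x = 0} = c # sorted_list_of_set {x. poly (P1 m) x = 0}"
proof -
  define Z where "Z = {x. poly (P1 m) x = 0}"
  have "finite (insert c Z)" using finite_zeros_P1 unfolding Z_def by simp
  moreover have "Min (insert c Z) = c"
    by (rule Min_eqI[OF \<open>finite (insert c Z)\<close>]) (auto simp: Z_def less_imp_le c_less_zeros_P1)
  moreover have "insert c Z - {c} = Z" using c_less_zeros_P1 unfolding Z_def by blast
  ultimately show ?thesis
    unfolding zeros_A Z_def[symmetric] using sorted_list_of_set_nonempty[of "insert c Z"] by simp
qed

lemma real_rooted_0: "real_rooted 0"
proof -
  have "card {x. poly A x = 0} = Suc (card {x. poly (P1 m) x = 0})"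
    unfolding zeros_A using finite_zeros_P1 c_less_zeros_P1[of c] by (auto simp: card_insert_if)
  then show ?thesis unfolding real_rooted_def pencil_0 using zeros_P1[of m] n_eq_Suc_m by simp
qed

lemma pencil_zero_0_1: "pencil_zero 0 1 = c"
  unfolding pencil_zero_def zero_k_def pencil_0 sorted_zeros_A by simp

lemma pencil_zero_0_Suc: "1 \<le> k \<Longrightarrow> pencil_zero 0 (Suc k) = zero_k (P1 m) k"
  unfolding pencil_zero_def zero_k_def pencil_0 sorted_zeros_A by (cases k) auto

lemma poly_Q_c_nonzero: "poly (Q n) c \<noteq> 0"
  using zeros_Q[of n] c_less_a by auto

lemma t_Q_neg: "t_Q < 0"
proof -
  have "poly (Q n) (pencil_zero t_Q 1) = 0"
    using real_rooted_pencil_zero(1)[OF real_rooted_t_Q order_refl n_ge_1] pencil_t_Q by simp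
  then have "a < pencil_zero t_Q 1" using zeros_Q[of n] by auto
  moreover have "t_Q \<noteq> 0" using poly_Q_c_nonzero poly_A_c pencil_0 pencil_t_Q by force
  moreover have "0 < t_Q \<Longrightarrow> pencil_zero t_Q 1 < pencil_zero 0 1"
    by (rule pencil_zero_decreasing[OF real_rooted_0 real_rooted_t_Q _ order_refl n_ge_1])
  ultimately show ?thesis using pencil_zero_0_1 c_less_a by force
qed

definition B :: real where "B = - poly (Q n) c * poly Pm c / L_mu (Pm * Pm)"

lemma poly_Pm_c_mult_L_Pm: "poly Pm c * L Pm = L (Pm * Pm)"
proof -
  define s where "s = synthetic_div Pm c"
  have "s = 0 \<or> degree s < m" unfolding s_def using degree_synthetic_div_less Pm_monic by simp
  then have "L_mu (Pm * s) = 0" by (rule mu.orth_lowerD[OF orth_Pm])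
  moreover have "Pm * ([:-c,1:] * s) = Pm * Pm - smult (poly Pm c) Pm"
    unfolding s_def linear_mult_synthetic_div by (simp add: right_diff_distrib mult_pCons_right)
  ultimately show ?thesis unfolding L_mu_def by (simp add: ac_simps nu.diff nu.smult)
qed

lemma L_mu_Pm_Pm: "L_mu (Pm * Pm) = - poly (Q n) c * L Pm"
proof -
  define R where "R = [:-c,1:] * Pm - Q n"
  have "degree ([:-c,1:] * Pm) = n" using Pm_monic Pm_nonzero n_eq_Suc_m by (simp add: degree_mult_eq)
  moreover have "lead_coeff ([:-c,1:] * Pm) = 1"
    unfolding lead_coeff_mult using Pm_monic by simp
  ultimately have "R = 0 \<or> degree R < n" unfolding R_def by (rule monic_diff_degree_less[OF _ _ Q_monic])
  then have "degree R \<le> m" using n_eq_Suc_m by auto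
  define s where "s = synthetic_div R c"
  have "s = 0 \<or> degree s < m" unfolding s_def using degree_synthetic_div_less[OF \<open>degree R \<le> m\<close>] .
  then have "L_mu (Pm * s) = 0" by (rule mu.orth_lowerD[OF orth_Pm])
  have "L (Q n * Pm) = 0" using orth_Q[of n] Pm_monic n_eq_Suc_m unfolding orth_lower_def by simp
  have "L_mu (Pm * Pm) = L (Pm * (Q n + R))" unfolding L_mu_def R_def by (simp add: ac_simps)
  also have "\<dots> = L (Pm * ([:-c,1:] * s)) + poly R c * L Pm"
    using \<open>L (Q n * Pm) = 0\<close> unfolding s_def linear_mult_synthetic_div
    by (simp add: algebra_simps nu.add nu.diff nu.smult mult_pCons_right)
  also have "L (Pm * ([:-c,1:] * s)) = 0"
    using \<open>L_mu (Pm * s) = 0\<close> unfolding L_mu_def by (simp add: ac_simps)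
  finally show ?thesis unfolding R_def by simp
qed

lemma L_Pm_nonzero: "L Pm \<noteq> 0"
  using poly_Pm_c_mult_L_Pm nu.square_pos[OF Pm_nonzero] by auto

lemma B_eq: "B = poly Pm c / L Pm"
  unfolding B_def L_mu_Pm_Pm using poly_Q_c_nonzero L_Pm_nonzero by (simp add: field_simps)

lemma B_pos: "B > 0"
  unfolding B_eq using poly_Pm_c_mult_L_Pm nu.square_pos[OF Pm_nonzero]
  by (metis divide_pos_pos divide_neg_neg zero_less_mult_iff)

text \<open>Testing \<open>Q\<^sub>n\<close> and \<open>Q\<^sub>n\<^sup>c\<^sup>,\<^sup>N\<close> against the constant \<open>1\<close> gives \<open>L A + t\<^sub>Q L P\<^sub>n\<^sub>-\<^sub>1 = 0\<close>
  and \<open>L A + t\<^sub>N L P\<^sub>n\<^sub>-\<^sub>1 + N t\<^sub>N P\<^sub>n\<^sub>-\<^sub>1(c) = 0\<close>.\<close>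
lemma t_N_eq:
  assumes "N > 0"
  shows "t_N N = t_Q / (1 + N * B)"
proof -
  have "degree (1::real poly) < n" using n_ge_1 by simp
  then have "L_N N (QN N n * 1) = 0" "L (Q n * 1) = 0"
    using orth_QN[OF assms, of n] orth_Q[of n] unfolding orth_lower_def by blast+
  then have "L A + t_N N * L Pm + N * (t_N N * poly Pm c) = 0" "L A + t_Q * L Pm = 0"
    using QN_eq_pencil[OF assms] Q_eq_pencil poly_A_c
    unfolding L_N_def pencil_def by (simp_all add: nu.add nu.smult)
  then have "L Pm * (t_N N * (1 + N * B) - t_Q) = 0"
    using B_eq L_Pm_nonzero by (simp add: algebra_simps)
  then have "t_N N * (1 + N * B) = t_Q" using L_Pm_nonzero by simp
  moreover have "1 + N * B > 0" using assms B_pos by (simp add: add_pos_pos)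
  ultimately show ?thesis by (simp add: field_simps)
qed

lemma t_Q_less_t_N:
  assumes "N > 0"
  shows "t_Q < t_N N"
proof -
  have "1 < 1 + N * B" using assms B_pos by simp
  then have "t_Q * (1 + N * B) < t_Q" using t_Q_neg by (simp add: mult_less_cancel_left_neg)
  then show ?thesis unfolding t_N_eq[OF assms] using \<open>1 < 1 + N * B\<close> by (simp add: field_simps)
qed

lemma t_N_neg: "N > 0 \<Longrightarrow> t_N N < 0"
  using t_Q_neg B_pos by (simp add: t_N_eq divide_neg_pos add_pos_pos)

lemma t_N_strict_mono: "0 < N1 \<Longrightarrow> N1 < N2 \<Longrightarrow> t_N N1 < t_N N2"
  using t_Q_neg B_pos
  by (simp add: t_N_eq divide_strict_left_mono_neg add_pos_pos mult_strict_right_mono)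

subsection \<open>Asymptotics as \<open>N \<rightarrow> \<infinity>\<close>\<close>

lemma t_N_tendsto: "(t_N \<longlongrightarrow> 0) at_top"
proof -
  have "filterlim (\<lambda>N. 1 + N * B) at_top at_top"
    by (intro filterlim_tendsto_add_at_top[OF tendsto_const]
        filterlim_at_top_mult_tendsto_pos[OF tendsto_const B_pos filterlim_ident])
  then have "((\<lambda>N. t_Q / (1 + N * B)) \<longlongrightarrow> 0) at_top"
    by (intro tendsto_divide_0[OF tendsto_const] filterlim_at_top_imp_at_infinity)
  moreover have "eventually (\<lambda>N. t_Q / (1 + N * B) = t_N N) at_top"
    using eventually_gt_at_top[of 0] by eventually_elim (simp add: t_N_eq)
  ultimately show ?thesis by (rule Lim_transform_eventually)
qed

lemma N_mult_t_N_tendsto: "((\<lambda>N. N * t_N N) \<longlongrightarrow> t_Q / B) at_top"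
proof -
  have "((\<lambda>N. t_Q / (inverse N + B)) \<longlongrightarrow> t_Q / (0 + B)) at_top"
    using B_pos by (intro tendsto_intros tendsto_inverse_0_at_top[OF filterlim_ident]) auto
  moreover have "eventually (\<lambda>N. t_Q / (inverse N + B) = N * t_N N) at_top"
    using eventually_gt_at_top[of 0] by eventually_elim (simp add: t_N_eq field_simps)
  ultimately show ?thesis by (simp add: Lim_transform_eventually)
qed

lemma eventually_pencil_zero_0_less:
  assumes "1 \<le> k" "k \<le> n"
  shows "eventually (\<lambda>N. pencil_zero 0 k < pencil_zero (t_N N) k) at_top"
  using eventually_gt_at_top[of 0]
  by eventually_elim
    (use pencil_zero_decreasing[OF real_rooted_t_N real_rooted_0 t_N_neg assms] in simp)

lemma pencil_zero_less:
  assumes "real_rooted s" "real_rooted t" "1 \<le> k" "k \<le> n" "pencil_zero s k \<le> w"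
    and no_pole: "\<forall>z\<in>{pencil_zero s k..w}. poly Pm z \<noteq> 0" and "ratio w < t"
  shows "pencil_zero t k < w"
proof (rule ccontr)
  note zs = real_rooted_pencil_zero[OF assms(1,3,4)] and zt = real_rooted_pencil_zero[OF assms(2,3,4)]
  assume "\<not> ?thesis"
  then have "w \<le> pencil_zero t k" by simp
  then have "poles_below w = poles_below (pencil_zero t k)"
    using poles_below_mono[of "pencil_zero s k" w] poles_below_mono[of w "pencil_zero t k"]
      zs(4) zt(4) assms(5) by simp
  then show False
    using ratio_decreasing_between_poles[of w "pencil_zero t k"] zt(2,3) \<open>ratio w < t\<close>
      \<open>w \<le> pencil_zero t k\<close> by (cases "w = pencil_zero t k") auto
qed

lemma pencil_zero_t_N_tendsto:
  assumes k: "1 \<le> k" "k \<le> n"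
  shows "((\<lambda>N. pencil_zero (t_N N) k) \<longlongrightarrow> pencil_zero 0 k) at_top"
proof (rule order_tendstoI)
  fix l assume "l < pencil_zero 0 k"
  show "eventually (\<lambda>N. l < pencil_zero (t_N N) k) at_top"
    using eventually_pencil_zero_0_less[OF k] by eventually_elim (use \<open>l < _\<close> in simp)
next
  define z0 where "z0 = pencil_zero 0 k"
  note z0 = real_rooted_pencil_zero[OF real_rooted_0 k, folded z0_def]
  fix u assume "z0 < u"
  have "continuous (at z0) (poly Pm)" by (intro continuous_intros)
  from continuous_at_avoid[OF this z0(2)] obtain \<delta>
    where "\<delta> > 0" and \<delta>: "\<And>y. dist z0 y < \<delta> \<Longrightarrow> poly Pm y \<noteq> 0" by blast
  define w where "w = z0 + min (u - z0) (\<delta> / 2)"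
  have "z0 < w" "w \<le> u" unfolding w_def using \<open>z0 < u\<close> \<open>\<delta> > 0\<close> by auto
  have no_pole: "\<forall>y\<in>{z0..w}. poly Pm y \<noteq> 0"
    using \<delta> \<open>\<delta> > 0\<close> unfolding w_def dist_real_def by auto
  then have "ratio w < 0" using ratio_decreasing[OF \<open>z0 < w\<close>] z0(3) by simp
  then have "eventually (\<lambda>N. ratio w < t_N N) at_top" by (rule order_tendstoD[OF t_N_tendsto])
  then show "eventually (\<lambda>N. pencil_zero (t_N N) k < u) at_top"
    using eventually_gt_at_top[of 0]
  proof eventually_elim
    case (elim N)
    have "pencil_zero (t_N N) k < w"
      by (rule pencil_zero_less[OF real_rooted_0 real_rooted_t_N[OF elim(2)] k])
        (use \<open>z0 < w\<close> no_pole elim(1) in \<open>simp_all add: z0_def\<close>)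
    then show ?case using \<open>w \<le> u\<close> by simp
  qed
qed

text \<open>Since \<open>ratio\<close> maps the \<open>k\<close>-th zero of \<open>pencil t\<close> to \<open>t\<close>, the rate of convergence is
  \<open>lim N t\<^sub>N\<close> divided by the derivative of \<open>ratio\<close> at the \<open>k\<close>-th zero of \<open>A\<close>.\<close>
lemma pencil_zero_t_N_rate:
  assumes k: "1 \<le> k" "k \<le> n"
  defines "z0 \<equiv> pencil_zero 0 k"
  shows "((\<lambda>N. N * (pencil_zero (t_N N) k - z0))
    \<longlongrightarrow> (t_Q / B) / - (wronskian z0 / (poly Pm z0 * poly Pm z0))) at_top"
proof -
  note z0 = real_rooted_pencil_zero[OF real_rooted_0 k, folded z0_def]
  define r where "r = - (wronskian z0 / (poly Pm z0 * poly Pm z0))"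
  have "r \<noteq> 0" unfolding r_def using wronskian_pos[OF z0(2)] z0(2) by simp
  have "((\<lambda>x. (ratio x - ratio z0) / (x - z0)) \<longlongrightarrow> r) (at z0)"
    using ratio_has_derivative[OF z0(2)] unfolding r_def by (simp add: has_field_derivative_iff)
  moreover have "filterlim (\<lambda>N. pencil_zero (t_N N) k) (at z0) at_top"
    unfolding filterlim_at z0_def
    using eventually_pencil_zero_0_less[OF k] pencil_zero_t_N_tendsto[OF k]
    by (auto elim: eventually_mono)
  ultimately have "((\<lambda>N. (ratio (pencil_zero (t_N N) k) - ratio z0) / (pencil_zero (t_N N) k - z0))
      \<longlongrightarrow> r) at_top"
    by (rule filterlim_compose)
  then have "((\<lambda>N. (N * t_N N) / ((ratio (pencil_zero (t_N N) k) - ratio z0) / (pencil_zero (t_N N) k - z0)))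
      \<longlongrightarrow> (t_Q / B) / r) at_top"
    by (intro tendsto_divide N_mult_t_N_tendsto \<open>r \<noteq> 0\<close>)
  moreover have "eventually (\<lambda>N. (N * t_N N) / ((ratio (pencil_zero (t_N N) k) - ratio z0)
      / (pencil_zero (t_N N) k - z0)) = N * (pencil_zero (t_N N) k - z0)) at_top"
    using eventually_gt_at_top[of 0] eventually_pencil_zero_0_less[OF k]
  proof eventually_elim
    case (elim N)
    then have "t_N N \<noteq> 0" "pencil_zero (t_N N) k - z0 \<noteq> 0"
      using t_N_neg unfolding z0_def by force+
    then show ?case
      using real_rooted_pencil_zero(3)[OF real_rooted_t_N[OF elim(1)] k] z0(3)
      by (simp add: field_simps)
  qed
  ultimately show ?thesis unfolding r_def by (rule Lim_transform_eventually)
qed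

lemma pderiv_A: "poly (pderiv A) x = (x - c) * poly (pderiv (P1 m)) x + poly (P1 m) x"
  unfolding A_def by (simp add: pderiv_mult pderiv_pCons)

lemma pencil_zero_t_N_rate_value:
  assumes k: "1 \<le> k" "k \<le> n"
  defines "z0 \<equiv> pencil_zero 0 k"
  shows "(t_Q / B) / - (wronskian z0 / (poly Pm z0 * poly Pm z0))
    = - poly (Q n) z0 / (B * poly (pderiv A) z0)"
proof -
  note z0 = real_rooted_pencil_zero[OF real_rooted_0 k, folded z0_def]
  have "poly A z0 = 0" using z0(1) pencil_0 by simp
  then have W: "wronskian z0 = poly (pderiv A) z0 * poly Pm z0" unfolding wronskian_def by simp
  then have "poly (pderiv A) z0 \<noteq> 0" using wronskian_pos[OF z0(2)] by auto
  moreover have "poly (Q n) z0 = t_Q * poly Pm z0"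
    using Q_eq_pencil \<open>poly A z0 = 0\<close> unfolding pencil_def by simp
  ultimately show ?thesis unfolding W using z0(2) B_pos by (simp add: field_simps)
qed

lemma zero_k_Q: "zero_k (Q n) k = pencil_zero t_Q k"
  unfolding pencil_zero_def pencil_t_Q ..

lemma zero_k_QN: "N > 0 \<Longrightarrow> zero_k (QN N n) k = pencil_zero (t_N N) k"
  unfolding pencil_zero_def by (simp add: pencil_t_N)

lemma eventually_zero_k_QN: "eventually (\<lambda>N. pencil_zero (t_N N) k = zero_k (QN N n) k) at_top"
  using eventually_gt_at_top[of 0] by eventually_elim (simp add: zero_k_QN)

lemma card_zeros:
  "card {x. poly (Q n) x = 0} = n \<and> card {x. poly (P1 (n - 1)) x = 0} = n - 1 \<and>
    (\<forall>N>0. card {x. poly (QN N n) x = 0} = n)"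
  using zeros_Q zeros_P1 zeros_QN by simp

lemma zeros_interlace:
  "\<forall>N>0. c < zero_k (QN N n) 1 \<and>
    (\<forall>k\<in>{1..n}. zero_k (QN N n) k < zero_k (Q n) k) \<and>
    (\<forall>k\<in>{1..n-1}. zero_k (Q n) k < zero_k (P1 (n - 1)) k \<and>
      zero_k (P1 (n - 1)) k < zero_k (QN N n) (k + 1))"
proof (intro allI impI conjI ballI)
  fix N :: real assume "N > 0"
  have "real_rooted (t_N N)" using real_rooted_t_N[OF \<open>N > 0\<close>] .
  show "c < zero_k (QN N n) 1"
    using pencil_zero_decreasing[OF \<open>real_rooted (t_N N)\<close> real_rooted_0 t_N_neg[OF \<open>N > 0\<close>]
        order_refl n_ge_1]
    unfolding zero_k_QN[OF \<open>N > 0\<close>] pencil_zero_0_1 .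
  show "zero_k (QN N n) k < zero_k (Q n) k" if "k \<in> {1..n}" for k
    using pencil_zero_decreasing[OF real_rooted_t_Q \<open>real_rooted (t_N N)\<close> t_Q_less_t_N[OF \<open>N > 0\<close>]]
      that by (simp add: zero_k_QN[OF \<open>N > 0\<close>] zero_k_Q)
  fix k assume "k \<in> {1..n-1}"
  then have k: "1 \<le> k" "k < n" "1 \<le> Suc k" "Suc k \<le> n" using n_ge_1 by auto
  show "zero_k (Q n) k < zero_k (P1 (n - 1)) k"
    using pencil_zero_interlacing[OF real_rooted_t_Q real_rooted_0 k(1,2)]
    by (simp add: zero_k_Q pencil_zero_0_Suc[OF k(1)] m_def)
  show "zero_k (P1 (n - 1)) k < zero_k (QN N n) (k + 1)"
    using pencil_zero_decreasing[OF \<open>real_rooted (t_N N)\<close> real_rooted_0 t_N_neg[OF \<open>N > 0\<close>] k(3,4)]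
    by (simp add: zero_k_QN[OF \<open>N > 0\<close>] pencil_zero_0_Suc[OF k(1)] m_def)
qed

lemma zeros_QN_decreasing:
  "\<forall>k\<in>{1..n}. \<forall>N1 N2. 0 < N1 \<longrightarrow> N1 < N2 \<longrightarrow> zero_k (QN N2 n) k < zero_k (QN N1 n) k"
proof (intro ballI allI impI)
  fix k and N1 N2 :: real assume "k \<in> {1..n}" "0 < N1" "N1 < N2"
  then show "zero_k (QN N2 n) k < zero_k (QN N1 n) k"
    using pencil_zero_decreasing[OF real_rooted_t_N real_rooted_t_N t_N_strict_mono, of N1 N2 k]
    by (simp add: zero_k_QN)
qed

lemma zero_QN_1_tendsto: "((\<lambda>N. zero_k (QN N n) 1) \<longlongrightarrow> c) at_top"
  using Lim_transform_eventually[OF pencil_zero_t_N_tendsto[OF order_refl n_ge_1] eventually_zero_k_QN]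
  unfolding pencil_zero_0_1 .

lemma zero_QN_Suc_tendsto:
  "\<forall>k\<in>{1..n-1}. ((\<lambda>N. zero_k (QN N n) (k + 1)) \<longlongrightarrow> zero_k (P1 (n - 1)) k) at_top"
proof
  fix k assume "k \<in> {1..n-1}"
  then have "1 \<le> Suc k" "Suc k \<le> n" by auto
  from Lim_transform_eventually[OF pencil_zero_t_N_tendsto[OF this] eventually_zero_k_QN]
  show "((\<lambda>N. zero_k (QN N n) (k + 1)) \<longlongrightarrow> zero_k (P1 (n - 1)) k) at_top"
    using \<open>k \<in> {1..n-1}\<close> by (simp add: pencil_zero_0_Suc m_def)
qed

lemma zero_QN_rate:
  assumes "1 \<le> k" "k \<le> n"
  shows "((\<lambda>N. N * (zero_k (QN N n) k - pencil_zero 0 k))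
    \<longlongrightarrow> - poly (Q n) (pencil_zero 0 k) / (B * poly (pderiv A) (pencil_zero 0 k))) at_top"
proof -
  have "eventually (\<lambda>N. N * (pencil_zero (t_N N) k - pencil_zero 0 k)
      = N * (zero_k (QN N n) k - pencil_zero 0 k)) at_top"
    using eventually_zero_k_QN[of k] by eventually_elim simp
  from Lim_transform_eventually[OF pencil_zero_t_N_rate[OF assms] this]
  show ?thesis unfolding pencil_zero_t_N_rate_value[OF assms] .
qed

lemma zero_QN_1_rate:
  "((\<lambda>N. N * (zero_k (QN N n) 1 - c)) \<longlongrightarrow> - poly (Q n) c / (B * poly (P1 (n - 1)) c)) at_top"
  using zero_QN_rate[OF order_refl n_ge_1] unfolding pencil_zero_0_1 pderiv_A m_def by simp

lemma zero_QN_Suc_rate: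
  "\<forall>k\<in>{1..n-1}. ((\<lambda>N. N * (zero_k (QN N n) (k + 1) - zero_k (P1 (n - 1)) k))
    \<longlongrightarrow> - poly (Q n) (zero_k (P1 (n - 1)) k) /
    (B * (zero_k (P1 (n - 1)) k - c) * poly (pderiv (P1 (n - 1))) (zero_k (P1 (n - 1)) k))) at_top"
proof
  fix k assume "k \<in> {1..n-1}"
  then have k: "1 \<le> k" "1 \<le> Suc k" "Suc k \<le> n" by auto
  define x where "x = zero_k (P1 m) k"
  have "pencil_zero 0 (Suc k) = x" unfolding x_def using pencil_zero_0_Suc[OF k(1)] .
  moreover have "poly (P1 m) x = 0"
  proof -
    have "poly A x = 0"
      using real_rooted_pencil_zero(1)[OF real_rooted_0 k(2,3)] \<open>pencil_zero 0 (Suc k) = x\<close> pencil_0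
      by simp
    moreover have "x \<noteq> c"
      using real_rooted_pencil_zero(4)[OF real_rooted_0 k(2,3)] \<open>pencil_zero 0 (Suc k) = x\<close>
        real_rooted_pencil_zero(4)[OF real_rooted_0 order_refl n_ge_1] pencil_zero_0_1 k(1)
      by force
    ultimately show ?thesis unfolding A_def by simp
  qed
  ultimately show "((\<lambda>N. N * (zero_k (QN N n) (k + 1) - zero_k (P1 (n - 1)) k))
    \<longlongrightarrow> - poly (Q n) (zero_k (P1 (n - 1)) k) /
    (B * (zero_k (P1 (n - 1)) k - c) * poly (pderiv (P1 (n - 1))) (zero_k (P1 (n - 1)) k))) at_top"
    using zero_QN_rate[OF k(2,3)] unfolding pderiv_A x_def m_def by (simp add: mult.assoc)
qed

end

section \<open>The functional of \<open>\<nu>\<close>\<close>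

lemma AE_msupport_subset:
  fixes M :: "real measure"
  assumes "sets M = sets borel" "msupport M \<subseteq> S"
  shows "AE x in M. x \<in> S"
proof -
  define F where "F = {ball x e | x e. e > 0 \<and> emeasure M (ball x e) = 0}"
  obtain F' where F': "F' \<subseteq> F" "countable F'" "\<Union>F' = \<Union>F"
    using Lindelof[of F] unfolding F_def by blast
  have "(\<Union>U\<in>F'. U) \<in> null_sets M"
  proof (rule null_sets_UN'[OF F'(2)])
    fix U assume "U \<in> F'"
    then obtain x e where "U = ball x e" "emeasure M (ball x e) = 0" using F'(1) unfolding F_def by blast
    then show "U \<in> null_sets M" using assms(1) by (simp add: null_sets_def)
  qed
  moreover have "{x\<in>space M. x \<notin> S} \<subseteq> \<Union>F'"
  proof
    fix x assume "x \<in> {x\<in>space M. x \<notin> S}"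
    then have "x \<notin> msupport M" using assms(2) by auto
    then obtain e where "e > 0" "emeasure M (ball x e) = 0"
      unfolding msupport_def by (auto simp: not_gr_zero)
    then have "ball x e \<in> F" unfolding F_def by blast
    moreover have "x \<in> ball x e" using \<open>e > 0\<close> by simp
    ultimately show "x \<in> \<Union>F'" using F'(3) by blast
  qed
  ultimately show ?thesis by (intro AE_I') simp_all
qed

lemma finite_measure_if_integrable_one:
  assumes "integrable M (\<lambda>x. 1::real)"
  shows "finite_measure M"
proof
  have "(\<integral>\<^sup>+ x. ennreal 1 \<partial>M) \<noteq> \<infinity>" using integrableD(2)[OF assms] by simp
  then show "emeasure M (space M) \<noteq> \<infinity>" by (simp add: nn_integral_const)
qed

locale geronimus_measure = finite_measure M for M :: "real measure" +
  fixes a b c :: real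
  assumes sets_M: "sets M = sets borel"
    and infinite_support: "infinite (msupport M)"
    and convex_hull_support: "convex hull (msupport M) = {a..b}"
    and c_less_a: "c < a"
begin

lemma borel_measurable_M: "f \<in> borel_measurable borel \<Longrightarrow> f \<in> borel_measurable M"
  unfolding measurable_cong_sets[OF sets_M refl] .

lemma msupport_subset: "msupport M \<subseteq> {a..b}"
  using convex_hull_support hull_subset[of "msupport M" convex] by simp

lemma a_less_b: "a < b"
proof (rule ccontr)
  assume "\<not> a < b"
  then have "msupport M \<subseteq> {a}" using msupport_subset by auto
  then show False using infinite_support by (meson finite.emptyI finite_insert finite_subset)
qed

lemma AE_in_interval: "AE x in M. x \<in> {a..b}"
  by (rule AE_msupport_subset[OF sets_M msupport_subset])

definition L_nu :: "real poly \<Rightarrow> real" where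
  "L_nu h = (\<integral>x. poly h x / (x - c) \<partial>M)"

lemma borel_measurable_poly_div: "(\<lambda>x. poly h x / (x - c)) \<in> borel_measurable M"
  by (intro borel_measurable_M borel_measurable_divide borel_measurable_continuous_onI continuous_intros)

lemma integrable_poly_div: "integrable M (\<lambda>x. poly h x / (x - c))"
proof -
  have "continuous_on {a..b} (\<lambda>x. poly h x / (x - c))"
    using c_less_a by (intro continuous_intros) auto
  then have "bounded ((\<lambda>x. poly h x / (x - c)) ` {a..b})"
    by (intro compact_imp_bounded compact_continuous_image) auto
  then obtain K where "\<And>x. x \<in> {a..b} \<Longrightarrow> norm (poly h x / (x - c)) \<le> K"
    unfolding bounded_iff by blast
  with AE_in_interval have "AE x in M. norm (poly h x / (x - c)) \<le> K" by auto
  then show ?thesis by (rule integrable_const_bound[OF _ borel_measurable_poly_div])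
qed

text \<open>Positivity uses that the support is infinite: a nonzero polynomial vanishing
  \<open>M\<close>-almost everywhere would vanish on a neighbourhood of a support point.\<close>
lemma positive_L_nu: "positive_poly_functional L_nu a b"
proof
  fix p q :: "real poly" and r :: real
  show "L_nu (p + q) = L_nu p + L_nu q"
    unfolding L_nu_def by (simp add: add_divide_distrib integrable_poly_div)
  show "L_nu (smult r p) = r * L_nu p"
    unfolding L_nu_def by (simp add: times_divide_eq_right[symmetric] del: times_divide_eq_right)
  show "a < b" by (rule a_less_b)
next
  fix h :: "real poly" assume h: "h \<noteq> 0" "\<forall>x\<in>{a..b}. 0 \<le> poly h x"
  have nonneg: "AE x in M. 0 \<le> poly h x / (x - c)"
    using AE_in_interval by eventually_elim (use h c_less_a in auto)
  show "0 < L_nu h"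
  proof (rule ccontr)
    assume "\<not> 0 < L_nu h"
    then have "AE x in M. poly h x / (x - c) = 0"
      using integral_nonneg_AE[OF nonneg] integral_nonneg_eq_0_iff_AE[OF integrable_poly_div nonneg]
      unfolding L_nu_def by simp
    then have "AE x in M. poly h x = 0"
      using AE_in_interval by eventually_elim (use c_less_a in auto)
    then obtain Z where Z: "{x \<in> space M. poly h x \<noteq> 0} \<subseteq> Z" "emeasure M Z = 0" "Z \<in> sets M"
      by (rule AE_E)
    have "finite {x. poly h x = 0}" using poly_roots_finite[OF h(1)] .
    then obtain x0 where "x0 \<in> msupport M" "poly h x0 \<noteq> 0"
      using infinite_support by (metis (mono_tags) finite_subset mem_Collect_eq subsetI)
    moreover have "open {x. poly h x \<noteq> 0}"
      using \<open>finite {x. poly h x = 0}\<close> by (simp add: finite_imp_closed open_Collect_neg)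
    ultimately obtain e where "e > 0" "ball x0 e \<subseteq> {x. poly h x \<noteq> 0}"
      using open_contains_ball by blast
    moreover have "space M = UNIV" using sets_eq_imp_space_eq[OF sets_M] by simp
    ultimately have "ball x0 e \<subseteq> Z" using Z(1) by auto
    then have "emeasure M (ball x0 e) = 0" using Z(2,3) emeasure_mono[of "ball x0 e" Z M] by simp
    then show False using \<open>x0 \<in> msupport M\<close> \<open>e > 0\<close> unfolding msupport_def by auto
  qed
qed

lemma ip_mu_eq: "ip_mu M f g = L_nu ([:-c,1:] * (f * g))"
  unfolding ip_mu_def L_nu_def
  by (intro integral_cong_AE borel_measurable_poly_div borel_measurable_M
      borel_measurable_continuous_onI continuous_intros AE_mp[OF AE_in_interval AE_I2]) (use c_less_a in auto)

lemma ip_ker_eq: "ip_ker M c f g = L_nu ([:-c,1:]^2 * (f * g))"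
  unfolding ip_ker_def L_nu_def
  by (intro integral_cong_AE borel_measurable_poly_div borel_measurable_M
      borel_measurable_continuous_onI continuous_intros AE_mp[OF AE_in_interval AE_I2]) (use c_less_a in \<open>auto simp: power2_eq_square\<close>)

lemma ip_nu_eq: "ip_nu M c f g = L_nu (f * g)"
  unfolding ip_nu_def L_nu_def by simp

lemma ip_nuN_eq: "ip_nuN M c N f g = L_nu (f * g) + N * poly (f * g) c"
  unfolding ip_nuN_def ip_nu_eq by simp

end

theorem theorem2:
  fixes M :: "real measure" and a b c :: real
    and P Q P1 :: "nat \<Rightarrow> real poly" and QN :: "real \<Rightarrow> nat \<Rightarrow> real poly"
    and n :: nat
  assumes borel: "sets M = sets borel"
    and ac: "absolutely_continuous lborel M"
    and moments: "\<forall>k::nat. integrable M (\<lambda>x. x ^ k)"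
    and supp_inf: "infinite (msupport M)"
    and hull: "convex hull (msupport M) = {a..b}"
    and ca: "c < a"
    and P: "is_MOPS (ip_mu M) P"
    and Q: "is_MOPS (ip_nu M c) Q"
    and P1: "is_MOPS (ip_ker M c) P1"
    and QN: "\<forall>N>0. is_MOPS (ip_nuN M c N) (QN N)"
    and n: "n \<ge> 1"
  defines "B \<equiv> - poly (Q n) c * poly (P (n - 1)) c / ip_mu M (P (n - 1)) (P (n - 1))"
  shows
    "(card {x. poly (Q n) x = 0} = n \<and> card {x. poly (P1 (n - 1)) x = 0} = n - 1 \<and>
      (\<forall>N>0. card {x. poly (QN N n) x = 0} = n)) \<and>
     (\<forall>N>0. c < zero_k (QN N n) 1 \<and>
      (\<forall>k\<in>{1..n}. zero_k (QN N n) k < zero_k (Q n) k) \<and>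
      (\<forall>k\<in>{1..n-1}. zero_k (Q n) k < zero_k (P1 (n - 1)) k \<and>
      zero_k (P1 (n - 1)) k < zero_k (QN N n) (k + 1))) \<and>
     (\<forall>k\<in>{1..n}. \<forall>N1 N2. 0 < N1 \<longrightarrow> N1 < N2 \<longrightarrow> zero_k (QN N2 n) k < zero_k (QN N1 n) k) \<and>
     (((\<lambda>N. zero_k (QN N n) 1) \<longlongrightarrow> c) at_top) \<and>
     (\<forall>k\<in>{1..n-1}. ((\<lambda>N. zero_k (QN N n) (k + 1)) \<longlongrightarrow> zero_k (P1 (n - 1)) k) at_top) \<and>
     (((\<lambda>N. N * (zero_k (QN N n) 1 - c)) \<longlongrightarrow> - poly (Q n) c / (B * poly (P1 (n - 1)) c)) at_top) \<and>
     (\<forall>k\<in>{1..n-1}. ((\<lambda>N. N * (zero_k (QN N n) (k + 1) - zero_k (P1 (n - 1)) k))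
      \<longlongrightarrow> - poly (Q n) (zero_k (P1 (n - 1)) k) /
      (B * (zero_k (P1 (n - 1)) k - c) * poly (pderiv (P1 (n - 1))) (zero_k (P1 (n - 1)) k))) at_top)"
proof -
  have "finite_measure M"
    using finite_measure_if_integrable_one moments[rule_format, of 0] by simp
  then interpret measure: geronimus_measure M a b c
    by (rule geronimus_measure.intro[OF _ geronimus_measure_axioms.intro[OF borel supp_inf hull ca]])
  have ip: "ip_mu M = (\<lambda>f g. measure.L_nu ([:-c,1:] * (f * g)))"
    "ip_nu M c = (\<lambda>f g. measure.L_nu (f * g))"
    "ip_ker M c = (\<lambda>f g. measure.L_nu ([:-c,1:]^2 * (f * g)))"
    "\<And>N. ip_nuN M c N = (\<lambda>f g. measure.L_nu (f * g) + N * poly (f * g) c)"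
    by (simp_all add: fun_eq_iff measure.ip_mu_eq measure.ip_nu_eq measure.ip_ker_eq measure.ip_nuN_eq)
  interpret zeros: geronimus_uvarov measure.L_nu a b c P Q P1 QN n
    using geronimus_uvarov.intro[OF measure.positive_L_nu ca] P Q P1 QN n unfolding ip .
  have "B = zeros.B"
    unfolding B_def zeros.B_def zeros.L_mu_def zeros.Pm_def zeros.m_def ip ..
  show ?thesis
    unfolding \<open>B = zeros.B\<close>
    by (intro conjI[OF zeros.card_zeros] conjI[OF zeros.zeros_interlace]
        conjI[OF zeros.zeros_QN_decreasing] conjI[OF zeros.zero_QN_1_tendsto]
        conjI[OF zeros.zero_QN_Suc_tendsto] conjI[OF zeros.zero_QN_1_rate] zeros.zero_QN_Suc_rate)
qed

end
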